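(* Let $B=(B,+,0)$ be a unitary magma and $(X,\varphi)$ a $B$-action. Then $$\big(X\rtimes_\varphi B,\ \langle1,0\rangle,\ \pi_X,\ \langle0,1\rangle,\ \pi_B\big)$$ is a retraction point from $X$ to $B$, where $\langle1,0\rangle(x)=(x,0)$, $\pi_X(x,b)=x$, $\langle0,1\rangle(b)=(0,b)$ and $\pi_B(x,b)=b$.
   Context: A unitary magma is a set with a binary operation $+$ and an element $0$ with $b+0=b=0+b$ for all $b$; morphisms preserve $+$ and $0$. A $B$-action is a pair $(X,\varphi)$ with $X$ a set and $\varphi\colon X\times B\times X\times B\to X$ a map such that: (1) there is an element $0\in X$ with $\varphi(x,0,0,0)=x=\varphi(0,0,x,0)$ for all $x\in X$; (2) $\varphi(x,b,0,0)=\varphi(x,0,0,b)=\varphi(0,0,x,b)$ for all $x\in X,b\in B$; (3) $\varphi(0,b,0,b')=0$ for all $b,b'\in B$; (4) writing $\varphi_{00}(x,b)=\varphi(x,0,0,b)$, for all $x,x'\in X$, $b,b'\in B$: $\varphi(x,b,x',b')=\varphi_{00}\big(\varphi(\varphi_{00}(x,b),b,\varphi_{00}(x',b'),b'),\,b+b'\big)$. The semidirect product $X\rtimes_\varphi B$ is the set $\{(x,b)\in X\times B\mid\varphi(x,0,0,b)=x\}$ with operation $(x,b)+(x',b')=(\varphi(x,b,x',b'),b+b')$ and neutral element $(0,0)$ (it is a unitary magma). Given a set $X$ and a unitary magma $B$, a retraction point from $X$ to $B$ is a tuple $(A,k,q,s,p)$ where $A=(A,+,0)$ is a unitary magma, $k\colon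 X\to A$ and $q\colon A\to X$ are maps, $s\colon B\to A$ and $p\colon A\to B$ are morphisms of unitary magmas, and $p(s(b))=b$, $q(k(x))=x$, $p(k(x))=0$, $q(s(b))=q(0)$, and $k(q(a))+s(p(a))=a$ for all $x\in X$, $b\in B$, $a\in A$. *)

theory Defs
  imports Main
begin

definition unitary_magma :: "'a set \<Rightarrow> ('a \<Rightarrow> 'a \<Rightarrow> 'a) \<Rightarrow> 'a \<Rightarrow> bool" where
  "unitary_magma M add z \<longleftrightarrow> z \<in> M \<and> (\<forall>a\<in>M. \<forall>b\<in>M. add a b \<in> M)
     \<and> (\<forall>b\<in>M. add b z = b \<and> add z b = b)"

definition magma_hom ::
  "'a set \<Rightarrow> ('a \<Rightarrow> 'a \<Rightarrow> 'a) \<Rightarrow> 'a \<Rightarrow> 'b set \<Rightarrow> ('b \<Rightarrow> 'b \<Rightarrow> 'b) \<Rightarrow> 'b \<Rightarrow> ('a \<Rightarrow> 'b) \<Rightarrow> bool" where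
  "magma_hom M add z N add' z' f \<longleftrightarrow> f ` M \<subseteq> N
     \<and> (\<forall>a\<in>M. \<forall>b\<in>M. f (add a b) = add' (f a) (f b)) \<and> f z = z'"

text \<open>A B-action (X, phi), with the element 0 of X required by condition (1) made explicit as zx.\<close>
definition B_action ::
  "'b set \<Rightarrow> ('b \<Rightarrow> 'b \<Rightarrow> 'b) \<Rightarrow> 'b \<Rightarrow> 'x set \<Rightarrow> ('x \<Rightarrow> 'b \<Rightarrow> 'x \<Rightarrow> 'b \<Rightarrow> 'x) \<Rightarrow> 'x \<Rightarrow> bool" where
  "B_action B add zb X phi zx \<longleftrightarrow>
     (\<forall>x\<in>X. \<forall>b\<in>B. \<forall>x'\<in>X. \<forall>b'\<in>B. phi x b x' b' \<in> X)
   \<and> zx \<in> X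
   \<and> (\<forall>x\<in>X. phi x zb zx zb = x \<and> phi zx zb x zb = x)
   \<and> (\<forall>x\<in>X. \<forall>b\<in>B. phi x b zx zb = phi x zb zx b \<and> phi x zb zx b = phi zx zb x b)
   \<and> (\<forall>b\<in>B. \<forall>b'\<in>B. phi zx b zx b' = zx)
   \<and> (\<forall>x\<in>X. \<forall>x'\<in>X. \<forall>b\<in>B. \<forall>b'\<in>B.
        phi x b x' b' = phi (phi (phi x zb zx b) b (phi x' zb zx b') b') zb zx (add b b'))"

definition sdp_carrier ::
  "'b set \<Rightarrow> 'b \<Rightarrow> 'x set \<Rightarrow> ('x \<Rightarrow> 'b \<Rightarrow> 'x \<Rightarrow> 'b \<Rightarrow> 'x) \<Rightarrow> 'x \<Rightarrow> ('x \<times> 'b) set" where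
  "sdp_carrier B zb X phi zx = {(x, b) \<in> X \<times> B. phi x zb zx b = x}"

definition sdp_op ::
  "('b \<Rightarrow> 'b \<Rightarrow> 'b) \<Rightarrow> ('x \<Rightarrow> 'b \<Rightarrow> 'x \<Rightarrow> 'b \<Rightarrow> 'x) \<Rightarrow> ('x \<times> 'b) \<Rightarrow> ('x \<times> 'b) \<Rightarrow> ('x \<times> 'b)" where
  "sdp_op add phi u v = (phi (fst u) (snd u) (fst v) (snd v), add (snd u) (snd v))"

definition retraction_point ::
  "'x set \<Rightarrow> 'b set \<Rightarrow> ('b \<Rightarrow> 'b \<Rightarrow> 'b) \<Rightarrow> 'b \<Rightarrow>
   'a set \<Rightarrow> ('a \<Rightarrow> 'a \<Rightarrow> 'a) \<Rightarrow> 'a \<Rightarrow>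
   ('x \<Rightarrow> 'a) \<Rightarrow> ('a \<Rightarrow> 'x) \<Rightarrow> ('b \<Rightarrow> 'a) \<Rightarrow> ('a \<Rightarrow> 'b) \<Rightarrow> bool" where
  "retraction_point X B addB zB A addA zA k q s p \<longleftrightarrow>
     unitary_magma A addA zA
   \<and> k ` X \<subseteq> A \<and> q ` A \<subseteq> X
   \<and> magma_hom B addB zB A addA zA s
   \<and> magma_hom A addA zA B addB zB p
   \<and> (\<forall>b\<in>B. p (s b) = b)
   \<and> (\<forall>x\<in>X. q (k x) = x)
   \<and> (\<forall>x\<in>X. p (k x) = zB)
   \<and> (\<forall>b\<in>B. q (s b) = q zA)
   \<and> (\<forall>a\<in>A. addA (k (q a)) (s (p a)) = a)"

end

theory Submission
  imports Defs
begin

text \<open>The carrier of the semidirect product consists of the pairs (x, b) fixed by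
  x \<mapsto> \<phi>(x, 0, 0, b). Condition (4) of a B-action says precisely that the
  first component of a product of two such pairs is again fixed, so the carrier is closed;
  condition (2) makes (0, 0) neutral, and (3) makes b \<mapsto> (0, b) a morphism. The
  splitting a = k(q a) + s(p a) holds because (x, 0) + (0, b) = (\<phi>(x, 0, 0, b), b) = (x, b)
  for (x, b) in the carrier.\<close>

lemma B_action_closed:
  assumes "B_action B add zb X phi zx" "x \<in> X" "b \<in> B" "x' \<in> X" "b' \<in> B"
  shows "phi x b x' b' \<in> X"
  using assms unfolding B_action_def by blast

lemma B_action_zero_mem:
  assumes "B_action B add zb X phi zx"
  shows "zx \<in> X"
  using assms unfolding B_action_def by blast

lemma B_action_right_neutral:
  assumes "B_action B add zb X phi zx" "x \<in> X"
  shows "phi x zb zx zb = x"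
  using assms unfolding B_action_def by blast

lemma B_action_act_left:
  assumes "B_action B add zb X phi zx" "x \<in> X" "b \<in> B"
  shows "phi x b zx zb = phi x zb zx b"
  using assms unfolding B_action_def by blast

lemma B_action_act_from_zero:
  assumes "B_action B add zb X phi zx" "x \<in> X" "b \<in> B"
  shows "phi zx zb x b = phi x zb zx b"
  using assms unfolding B_action_def by metis

lemma B_action_zero_absorb:
  assumes "B_action B add zb X phi zx" "b \<in> B" "b' \<in> B"
  shows "phi zx b zx b' = zx"
  using assms unfolding B_action_def by blast

lemma B_action_fixed_points_closed:
  assumes "B_action B add zb X phi zx" "x \<in> X" "b \<in> B" "x' \<in> X" "b' \<in> B"
    and "phi x zb zx b = x" "phi x' zb zx b' = x'"
  shows "phi (phi x b x' b') zb zx (add b b') = phi x b x' b'"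
proof -
  have "phi x b x' b' = phi (phi (phi x zb zx b) b (phi x' zb zx b') b') zb zx (add b b')"
    using assms(1-5) unfolding B_action_def by blast
  with assms(6,7) show ?thesis by simp
qed

lemma mem_sdp_carrier [simp]:
  "(x, b) \<in> sdp_carrier B zb X phi zx \<longleftrightarrow> x \<in> X \<and> b \<in> B \<and> phi x zb zx b = x"
  by (simp add: sdp_carrier_def)

lemma sdp_op_Pair [simp]:
  "sdp_op add phi (x, b) (x', b') = (phi x b x' b', add b b')"
  by (simp add: sdp_op_def)

lemma sdp_op_closed:
  assumes "unitary_magma B add zb" "B_action B add zb X phi zx"
    and "u \<in> sdp_carrier B zb X phi zx" "v \<in> sdp_carrier B zb X phi zx"
  shows "sdp_op add phi u v \<in> sdp_carrier B zb X phi zx"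
proof -
  obtain x b x' b' where uv: "u = (x, b)" "v = (x', b')"
    by fastforce
  with assms(3,4) have "x \<in> X" "b \<in> B" "x' \<in> X" "b' \<in> B"
    and "phi x zb zx b = x" "phi x' zb zx b' = x'"
    by auto
  with assms(1,2) show ?thesis
    unfolding uv unitary_magma_def
    by (simp add: B_action_closed B_action_fixed_points_closed)
qed

lemma sdp_unitary_magma:
  assumes "unitary_magma B add zb" "B_action B add zb X phi zx"
  shows "unitary_magma (sdp_carrier B zb X phi zx) (sdp_op add phi) (zx, zb)"
proof -
  have zb: "zb \<in> B" and unit: "\<And>b. b \<in> B \<Longrightarrow> add b zb = b \<and> add zb b = b"
    using assms(1) unfolding unitary_magma_def by auto
  have "(zx, zb) \<in> sdp_carrier B zb X phi zx"
    using zb assms(2) by (simp add: B_action_zero_mem B_action_zero_absorb)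
  moreover have "sdp_op add phi u (zx, zb) = u \<and> sdp_op add phi (zx, zb) u = u"
    if "u \<in> sdp_carrier B zb X phi zx" for u
  proof (cases u)
    case (Pair x b)
    with that have "x \<in> X" "b \<in> B" "phi x zb zx b = x"
      by auto
    with Pair unit show ?thesis
      by (simp add: B_action_act_left[OF assms(2)] B_action_act_from_zero[OF assms(2)])
  qed
  ultimately show ?thesis
    using sdp_op_closed[OF assms] unfolding unitary_magma_def by blast
qed

lemma mem_sdp_carrier_zero_right:
  assumes "B_action B add zb X phi zx" "zb \<in> B" "x \<in> X"
  shows "(x, zb) \<in> sdp_carrier B zb X phi zx"
  using assms by (simp add: B_action_right_neutral)

lemma sdp_Pair_zero_hom:
  assumes "unitary_magma B add zb" "B_action B add zb X phi zx"
  shows "magma_hom B add zb (sdp_carrier B zb X phi zx) (sdp_op add phi) (zx, zb) (\<lambda>b. (zx, b))"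
  using assms unfolding magma_hom_def unitary_magma_def
  by (auto simp: B_action_zero_mem B_action_zero_absorb)

lemma sdp_snd_hom:
  assumes "unitary_magma B add zb"
  shows "magma_hom (sdp_carrier B zb X phi zx) (sdp_op add phi) (zx, zb) B add zb snd"
  using assms unfolding magma_hom_def unitary_magma_def by auto

lemma sdp_decompose:
  assumes "unitary_magma B add zb" "u \<in> sdp_carrier B zb X phi zx"
  shows "sdp_op add phi (fst u, zb) (zx, snd u) = u"
  using assms unfolding unitary_magma_def by (cases u) auto

theorem proposition5p2:
  fixes B :: "'b set" and addB :: "'b \<Rightarrow> 'b \<Rightarrow> 'b" and zB :: 'b
    and X :: "'x set" and phi :: "'x \<Rightarrow> 'b \<Rightarrow> 'x \<Rightarrow> 'b \<Rightarrow> 'x" and zX :: 'x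
  assumes "unitary_magma B addB zB"
    and "B_action B addB zB X phi zX"
  shows "retraction_point X B addB zB
           (sdp_carrier B zB X phi zX) (sdp_op addB phi) (zX, zB)
           (\<lambda>x. (x, zB)) fst (\<lambda>b. (zX, b)) snd"
proof -
  have zB: "zB \<in> B"
    using assms(1) unfolding unitary_magma_def by blast
  have "(\<lambda>x. (x, zB)) ` X \<subseteq> sdp_carrier B zB X phi zX"
    using mem_sdp_carrier_zero_right[OF assms(2) zB] by blast
  moreover have "fst ` sdp_carrier B zB X phi zX \<subseteq> X"
    by (auto simp: sdp_carrier_def)
  moreover have "\<forall>u \<in> sdp_carrier B zB X phi zX. sdp_op addB phi (fst u, zB) (zX, snd u) = u"
    by (intro ballI sdp_decompose[OF assms(1)])
  ultimately show ?thesis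
    unfolding retraction_point_def
    using sdp_unitary_magma[OF assms] sdp_Pair_zero_hom[OF assms] sdp_snd_hom[OF assms(1)] zB
    by auto
qed

end
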